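(* Suppose Assumption 1 (context) holds. For ARDCA as in the context, every $k\ge0$ (every realization) and every $u\in\mathbb{D}$, $$-\sum_{i=1}^n\sigma_1(u_i,\tilde z_i^k)-\sigma_2(u,v^k)=\langle\triangle(x^*(v^k),ny^k),u\rangle+D(u)+f(x^*(v^k))+\frac1n\phi(ny^k),$$ where $\triangle(x,y)=[(A^Tx-y)^T/n,(Bx+b)^T,g_1(x),\dots,g_m(x)]^T$ for $x\in\mathbb{R}^t,y\in\mathbb{R}^n$, and $\phi(y)=\sum_{i=1}^n\phi_i(y_i)$.
   Context: Data: integers $n,t\ge1$, $p,m\ge0$; $A\in\mathbb{R}^{t\times n}$ (columns $A_j$), $B\in\mathbb{R}^{p\times t}$ (rows $B_{j,:}$), $b\in\mathbb{R}^p$; $f:\mathbb{R}^t\to\mathbb{R}$, $\phi_i:\mathbb{R}\to\mathbb{R}$, $g_i:\mathbb{R}^t\to\mathbb{R}$. Primal problem: minimize $f(x)+\frac1n\sum_i\phi_i(A_i^Tx)$ s.t. $Bx+b=0$, $g_i(x)\le0$. Assumption 1: $f$ $\mu$-strongly convex ($\mu>0$); $\phi_i$ convex and $M$-Lipschitz; $g_i$ convex with subgradients of norm $\le L_{g_i}$; a Slater point $\bar x$ ($g_i(\bar x)<0$, $B\bar x+b=0$) exists; the optimal value is finite. Dual: $\widehat n=n+p+m$, $\mathbb{D}=\{u:u_{n+p+1},\dots,u_{\widehat n}\ge0\}$, $L_f(x,u)=f(x)+\langle u_{1:n},A^Tx/n\rangle+\langle u_{n+1:n+p},Bx+b\rangle+\sum_iu_{n+p+i}g_i(x)$,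 $x^*(u)=\arg\min_xL_f(x,u)$, $d(u)=-L_f(x^*(u),u)$ with $\nabla d(u)=-[(A^Tx^*(u)/n)^T,(Bx^*(u)+b)^T,g(x^*(u))^T]^T$ on $\mathbb{D}$; $h_i=\frac1n\phi_i^*$ ($i\le n$, $\phi_i^*$ the convex conjugate), $h_i\equiv0$ ($n<i\le n+p$), $h_i$ = indicator of $[0,\infty)$ ($i>n+p$); $D(u)=d(u)+\sum_ih_i(u_i)$. $L_j=\|A_j\|^2/(n^2\mu)$ ($j\le n$), $\|B_{j-n,:}\|^2/\mu$ ($n<j\le n+p$), $L_{g_{j-n-p}}^2/\mu$ ($j>n+p$). ARDCA: $\theta_0=1/\widehat n$, $\theta_{k+1}=\frac{\sqrt{\theta_k^4+4\theta_k^2}-\theta_k^2}{2}$; $z^0=u^0\in\mathbb{D}$; for $k\ge0$: $v^k=\theta_kz^k+(1-\theta_k)u^k$; for every $i$, $\tilde z_i^k=\arg\min_{w\in\mathbb{R}}\widehat n\theta_kL_i(w-z_i^k)^2+\nabla_id(v^k)(w-z_i^k)+h_i(w)$; $i_k$ uniform on $\{1,\dots,\widehat n\}$; $z^{k+1}_{i_k}=\tilde z^k_{i_k}$, $z^{k+1}_j=z^k_j$ ($j\ne i_k$); $u^{k+1}=v^k+\widehat n\theta_k(z^{k+1}-z^k)$. Auxiliary quantities: $y_i^k=-2\widehat n\theta_kL_i(\tilde z_i^k-z_i^k)-\nabla_id(v^k)$ for $1\le i\le n$, $y^k=(y^k_1,\dots,y^k_n)$; for $i\le n$, $\sigma_1(u_i,\tilde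 z_i^k)=h_i(\tilde z_i^k)+y_i^k(u_i-\tilde z_i^k)-h_i(u_i)$; $\sigma_2(u,v^k)=d(v^k)+\langle\nabla d(v^k),u-v^k\rangle-d(u)$. *)

theory Defs
  imports "HOL-Analysis.Analysis" "HOL-Library.Extended_Real"
begin

text \<open>Dual vectors u in R^nhat
  (nhat = n+p+m) are functions nat => real, of which only the entries 1..nhat matter.
  The columns of A are A 1, ..., A n; the rows of B are Bm 1, ..., Bm p.\<close>

definition strongly_convex :: "real \<Rightarrow> ('a::real_normed_vector \<Rightarrow> real) \<Rightarrow> bool" where
  "strongly_convex \<mu> f \<longleftrightarrow> (\<forall>x y. \<forall>l::real. 0 \<le> l \<and> l \<le> 1 \<longrightarrow>
     f (l *\<^sub>R x + (1 - l) *\<^sub>R y) \<le> l * f x + (1 - l) * f y - \<mu> / 2 * l * (1 - l) * (norm (x - y))\<^sup>2)"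

definition is_subgrad :: "('a::real_inner \<Rightarrow> real) \<Rightarrow> 'a \<Rightarrow> 'a \<Rightarrow> bool" where
  "is_subgrad g x s \<longleftrightarrow> (\<forall>y. g x + inner s (y - x) \<le> g y)"

definition conj_fun :: "(real \<Rightarrow> real) \<Rightarrow> real \<Rightarrow> ereal" where
  "conj_fun \<phi> s = (SUP y. ereal (s * y - \<phi> y))"

definition dual_dom :: "nat \<Rightarrow> nat \<Rightarrow> nat \<Rightarrow> (nat \<Rightarrow> real) set" where
  "dual_dom n p m = {u. \<forall>i \<in> {n+p+1..n+p+m}. 0 \<le> u i}"

definition lagr :: "nat \<Rightarrow> nat \<Rightarrow> nat \<Rightarrow> (nat \<Rightarrow> real^'t::finite) \<Rightarrow> (nat \<Rightarrow> real^'t) \<Rightarrow> (nat \<Rightarrow> real)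
    \<Rightarrow> (real^'t \<Rightarrow> real) \<Rightarrow> (nat \<Rightarrow> real^'t \<Rightarrow> real) \<Rightarrow> real^'t \<Rightarrow> (nat \<Rightarrow> real) \<Rightarrow> real" where
  "lagr n p m A Bm b f g x u =
     f x + (\<Sum>i=1..n. u i * (inner (A i) x / real n))
         + (\<Sum>j=1..p. u (n+j) * (inner (Bm j) x + b j))
         + (\<Sum>i=1..m. u (n+p+i) * g i x)"

text \<open>x^*(u) = argmin_x L_f(x,u) (unique on \<D> under Assumption 1).\<close>
definition xstar :: "nat \<Rightarrow> nat \<Rightarrow> nat \<Rightarrow> (nat \<Rightarrow> real^'t::finite) \<Rightarrow> (nat \<Rightarrow> real^'t) \<Rightarrow> (nat \<Rightarrow> real)
    \<Rightarrow> (real^'t \<Rightarrow> real) \<Rightarrow> (nat \<Rightarrow> real^'t \<Rightarrow> real) \<Rightarrow> (nat \<Rightarrow> real) \<Rightarrow> real^'t" where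
  "xstar n p m A Bm b f g u =
     (THE x. \<forall>y. lagr n p m A Bm b f g x u \<le> lagr n p m A Bm b f g y u)"

definition dual_d :: "nat \<Rightarrow> nat \<Rightarrow> nat \<Rightarrow> (nat \<Rightarrow> real^'t::finite) \<Rightarrow> (nat \<Rightarrow> real^'t) \<Rightarrow> (nat \<Rightarrow> real)
    \<Rightarrow> (real^'t \<Rightarrow> real) \<Rightarrow> (nat \<Rightarrow> real^'t \<Rightarrow> real) \<Rightarrow> (nat \<Rightarrow> real) \<Rightarrow> real" where
  "dual_d n p m A Bm b f g u =
     - lagr n p m A Bm b f g (xstar n p m A Bm b f g u) u"

definition cmap :: "nat \<Rightarrow> nat \<Rightarrow> (nat \<Rightarrow> real^'t::finite) \<Rightarrow> (nat \<Rightarrow> real^'t) \<Rightarrow> (nat \<Rightarrow> real)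
    \<Rightarrow> (nat \<Rightarrow> real^'t \<Rightarrow> real) \<Rightarrow> real^'t \<Rightarrow> nat \<Rightarrow> real" where
  "cmap n p A Bm b g x i =
     (if i \<le> n then inner (A i) x / real n
      else if i \<le> n + p then inner (Bm (i - n)) x + b (i - n)
      else g (i - n - p) x)"

text \<open>The gradient of d on \<D>, given by the formula of the paper:
  grad d(u) = -[A^T x^*(u)/n; B x^*(u) + b; g(x^*(u))].\<close>
definition grad_d :: "nat \<Rightarrow> nat \<Rightarrow> nat \<Rightarrow> (nat \<Rightarrow> real^'t::finite) \<Rightarrow> (nat \<Rightarrow> real^'t) \<Rightarrow> (nat \<Rightarrow> real)
    \<Rightarrow> (real^'t \<Rightarrow> real) \<Rightarrow> (nat \<Rightarrow> real^'t \<Rightarrow> real) \<Rightarrow> (nat \<Rightarrow> real) \<Rightarrow> nat \<Rightarrow> real" where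
  "grad_d n p m A Bm b f g u i = - cmap n p A Bm b g (xstar n p m A Bm b f g u) i"

definition hfun :: "nat \<Rightarrow> nat \<Rightarrow> (nat \<Rightarrow> real \<Rightarrow> real) \<Rightarrow> nat \<Rightarrow> real \<Rightarrow> ereal" where
  "hfun n p \<phi> i w =
     (if i \<le> n then conj_fun (\<phi> i) w / ereal (real n)
      else if i \<le> n + p then 0
      else if 0 \<le> w then 0 else \<infinity>)"

definition dual_D :: "nat \<Rightarrow> nat \<Rightarrow> nat \<Rightarrow> (nat \<Rightarrow> real^'t::finite) \<Rightarrow> (nat \<Rightarrow> real^'t) \<Rightarrow> (nat \<Rightarrow> real)
    \<Rightarrow> (real^'t \<Rightarrow> real) \<Rightarrow> (nat \<Rightarrow> real \<Rightarrow> real) \<Rightarrow> (nat \<Rightarrow> real^'t \<Rightarrow> real) \<Rightarrow> (nat \<Rightarrow> real) \<Rightarrow> ereal" where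
  "dual_D n p m A Bm b f \<phi> g u =
     ereal (dual_d n p m A Bm b f g u) + (\<Sum>i=1..n+p+m. hfun n p \<phi> i (u i))"

definition Lconst :: "nat \<Rightarrow> nat \<Rightarrow> real \<Rightarrow> (nat \<Rightarrow> real^'t::finite) \<Rightarrow> (nat \<Rightarrow> real^'t) \<Rightarrow> (nat \<Rightarrow> real) \<Rightarrow> nat \<Rightarrow> real" where
  "Lconst n p \<mu> A Bm Lg j =
     (if j \<le> n then (norm (A j))\<^sup>2 / ((real n)\<^sup>2 * \<mu>)
      else if j \<le> n + p then (norm (Bm (j - n)))\<^sup>2 / \<mu>
      else (Lg (j - n - p))\<^sup>2 / \<mu>)"

fun ardca_theta :: "nat \<Rightarrow> nat \<Rightarrow> real" where
  "ardca_theta N 0 = 1 / real N"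
| "ardca_theta N (Suc k) =
     (let th = ardca_theta N k in (sqrt (th ^ 4 + 4 * th\<^sup>2) - th\<^sup>2) / 2)"

text \<open>The triangle map \<triangle>(x,y) paired with u.\<close>
definition tri_inner :: "nat \<Rightarrow> nat \<Rightarrow> nat \<Rightarrow> (nat \<Rightarrow> real^'t::finite) \<Rightarrow> (nat \<Rightarrow> real^'t) \<Rightarrow> (nat \<Rightarrow> real)
    \<Rightarrow> (nat \<Rightarrow> real^'t \<Rightarrow> real) \<Rightarrow> real^'t \<Rightarrow> (nat \<Rightarrow> real) \<Rightarrow> (nat \<Rightarrow> real) \<Rightarrow> real" where
  "tri_inner n p m A Bm b g x y u =
     (\<Sum>i=1..n. (inner (A i) x - y i) / real n * u i)
     + (\<Sum>j=1..p. (inner (Bm j) x + b j) * u (n+j))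
     + (\<Sum>i=1..m. g i x * u (n+p+i))"

end

theory Submission
  imports Defs
begin

text \<open>For \<open>i \<le> n\<close> the coordinate step minimises a quadratic plus \<open>h\<^sub>i = \<phi>\<^sub>i\<^sup>* / n\<close>,
  so its optimality condition makes \<open>y\<^sub>i\<close> a subgradient of \<open>h\<^sub>i\<close> at \<open>z\<^sub>i\<close>. Since \<open>\<phi>\<^sub>i\<close> is a
  finite convex function, this turns the Fenchel-Young inequality into the equality
  \<open>h\<^sub>i(z\<^sub>i) = z\<^sub>i y\<^sub>i - \<phi>\<^sub>i(n y\<^sub>i) / n\<close>. Substituting it into \<open>\<sigma>\<^sub>1\<close>, and recognising the linearisation
  of \<open>d\<close> at \<open>v\<close> evaluated at \<open>u\<close> as \<open>-L\<^sub>f(x\<^sup>*(v), u)\<close>, the left-hand side becomes an expression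
  that regroups into the right-hand side; the terms \<open>h\<^sub>i(u\<^sub>i)\<close> with \<open>i > n\<close> vanish on \<open>\<D>\<close>.\<close>

lemma le_of_forall_pos_le_diff_mult:
  fixes a b e :: real
  assumes "\<And>t. 0 < t \<Longrightarrow> t \<le> 1 \<Longrightarrow> b - t * e \<le> a"
  shows "b \<le> a"
proof (rule tendsto_le[OF trivial_limit_at_right_real])
  show "((\<lambda>t. b - t * e) \<longlongrightarrow> b) (at_right 0)"
    by (auto intro!: tendsto_eq_intros)
  show "((\<lambda>t. a) \<longlongrightarrow> a) (at_right 0)" by simp
  show "\<forall>\<^sub>F t in at_right 0. b - t * e \<le> a"
    using eventually_at_right_real[of 0 1] by (rule eventually_mono) (use assms in auto)
qed

lemma sum_ereal_neq_MInfty: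
  fixes h :: "'a \<Rightarrow> ereal"
  shows "(\<And>i. i \<in> S \<Longrightarrow> h i \<noteq> -\<infinity>) \<Longrightarrow> sum h S \<noteq> -\<infinity>"
  by (induction S rule: infinite_finite_induct) auto

lemma sum_ereal_minus:
  assumes "finite S" "\<And>i. i \<in> S \<Longrightarrow> h i \<noteq> -\<infinity>"
  shows "(\<Sum>i\<in>S. ereal (a i) - h i) = ereal (\<Sum>i\<in>S. a i) - sum h S"
  using assms
proof (induction S rule: finite_induct)
  case (insert x F)
  moreover have "sum h F \<noteq> -\<infinity>"
    using insert.prems by (intro sum_ereal_neq_MInfty) auto
  ultimately show ?case by (cases "h x"; cases "sum h F") auto
qed (simp add: zero_ereal_def)

lemma sum_1_atMost_add: "(\<Sum>i=1..a+b. F i) = (\<Sum>i=1..a. F i) + (\<Sum>j=1..b. F (a + j))"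
  for F :: "nat \<Rightarrow> 'a::comm_monoid_add"
  by (induction b) (auto simp: add.assoc)

lemma convex_on_real_has_subgradient:
  fixes \<psi> :: "real \<Rightarrow> real"
  assumes cvx: "convex_on UNIV \<psi>"
  obtains s where "\<And>w. \<psi> x + s * (w - x) \<le> \<psi> w"
proof -
  define slope where "slope = (\<lambda>t. (\<psi> x - \<psi> t) / (x - t))"
  have left_le_right: "slope t \<le> slope r" if "t < x" "x < r" for t r
  proof -
    have "(\<psi> t - \<psi> x) / (t - x) \<le> (\<psi> t - \<psi> r) / (t - r)"
      using convex_on_slope_le(1)[OF cvx, of t r x] that by auto
    also have "\<dots> \<le> (\<psi> x - \<psi> r) / (x - r)"
      using convex_on_slope_le(2)[OF cvx, of t r x] that by auto
    finally show ?thesis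
      unfolding slope_def by (smt (verit) minus_divide_divide)
  qed
  have bdd: "bdd_above (slope ` {..<x})"
    using left_le_right[of _ "x + 1"] by (auto simp: bdd_above_def)
  define s where "s = Sup (slope ` {..<x})"
  have "\<psi> x + s * (w - x) \<le> \<psi> w" for w
  proof (cases w x rule: linorder_cases)
    case less
    then have "slope w \<le> s"
      unfolding s_def using bdd by (auto intro: cSup_upper)
    with less show ?thesis
      by (simp add: slope_def divide_le_eq algebra_simps)
  next
    case greater
    then have "s \<le> slope w"
      unfolding s_def using left_le_right[OF _ greater] by (auto intro!: cSup_least)
    with greater show ?thesis
      by (simp add: slope_def le_divide_eq algebra_simps)
  qed simp
  then show thesis by (rule that)
qed

lemma conj_fun_ge: "ereal (s * y - \<psi> y) \<le> conj_fun \<psi> s"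
  unfolding conj_fun_def by (rule SUP_upper) simp

lemma conj_fun_le: "(\<And>y. s * y - \<psi> y \<le> c) \<Longrightarrow> conj_fun \<psi> s \<le> ereal c"
  unfolding conj_fun_def by (rule SUP_least) simp

lemma conj_fun_neq_MInfty: "conj_fun \<psi> s \<noteq> -\<infinity>"
  using conj_fun_ge[of s 0 \<psi>] by auto

lemma conj_fun_at_subgradient:
  assumes "\<And>w. \<psi> x + s * (w - x) \<le> \<psi> w"
  shows "conj_fun \<psi> s = ereal (s * x - \<psi> x)"
proof (rule antisym)
  show "conj_fun \<psi> s \<le> ereal (s * x - \<psi> x)"
    by (rule conj_fun_le) (use assms in \<open>smt (verit) right_diff_distrib\<close>)
qed (rule conj_fun_ge)

lemma conj_fun_convex:
  assumes "conj_fun \<psi> a = ereal Pa" "conj_fun \<psi> b = ereal Pb" "0 \<le> t" "t \<le> 1"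
  shows "conj_fun \<psi> (a + t * (b - a)) \<le> ereal ((1 - t) * Pa + t * Pb)"
proof (rule conj_fun_le)
  fix y
  have "a * y - \<psi> y \<le> Pa" "b * y - \<psi> y \<le> Pb"
    using conj_fun_ge[of a y \<psi>] conj_fun_ge[of b y \<psi>] assms(1,2) by simp_all
  then have "(1 - t) * (a * y - \<psi> y) + t * (b * y - \<psi> y) \<le> (1 - t) * Pa + t * Pb"
    using assms(3,4) by (intro add_mono mult_left_mono) auto
  then show "(a + t * (b - a)) * y - \<psi> y \<le> (1 - t) * Pa + t * Pb"
    by (simp add: algebra_simps)
qed

lemma conj_fun_eq_of_subgradient:
  assumes cvx: "convex_on UNIV \<psi>" and Pz: "conj_fun \<psi> z = ereal Pz"
    and subgrad: "\<And>w Pw. conj_fun \<psi> w = ereal Pw \<Longrightarrow> Pz + x * (w - z) \<le> Pw"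
  shows "Pz = z * x - \<psi> x"
proof (rule antisym)
  obtain s where "\<And>w. \<psi> x + s * (w - x) \<le> \<psi> w"
    using convex_on_real_has_subgradient[OF cvx] by blast
  then have "Pz + x * (s - z) \<le> s * x - \<psi> x"
    by (intro subgrad conj_fun_at_subgradient)
  then show "Pz \<le> z * x - \<psi> x" by (simp add: algebra_simps)
  show "z * x - \<psi> x \<le> Pz" using conj_fun_ge[of z x \<psi>] Pz by simp
qed

lemma conj_fun_prox_finite:
  fixes q :: "real \<Rightarrow> real"
  assumes cvx: "convex_on UNIV \<psi>" and nn: "0 < nn"
    and min: "\<And>w. ereal (q z) + conj_fun \<psi> z / ereal nn \<le> ereal (q w) + conj_fun \<psi> w / ereal nn"
  shows "conj_fun \<psi> z \<noteq> \<infinity>"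
proof
  assume "conj_fun \<psi> z = \<infinity>"
  moreover obtain s where "\<And>w. \<psi> 0 + s * (w - 0) \<le> \<psi> w"
    using convex_on_real_has_subgradient[OF cvx] by blast
  then have "conj_fun \<psi> s = ereal (s * 0 - \<psi> 0)"
    by (rule conj_fun_at_subgradient)
  ultimately show False
    using min[of s] nn by simp
qed

lemma conj_fun_prox_subgradient:
  assumes nn: "0 < nn"
    and min: "\<And>w. ereal (c * (z' - z)\<^sup>2 + G * (z' - z)) + conj_fun \<psi> z' / ereal nn
                 \<le> ereal (c * (w - z)\<^sup>2 + G * (w - z)) + conj_fun \<psi> w / ereal nn"
    and Pz: "conj_fun \<psi> z' = ereal Pz" and Pw: "conj_fun \<psi> w = ereal Pw"
  shows "Pz + nn * (- 2 * c * (z' - z) - G) * (w - z') \<le> Pw"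
proof -
  define q where "q = (\<lambda>w. c * (w - z)\<^sup>2 + G * (w - z))"
  define y where "y = - 2 * c * (z' - z) - G"
  have min_q: "ereal (q z') + conj_fun \<psi> z' / ereal nn \<le> ereal (q v) + conj_fun \<psi> v / ereal nn" for v
    using min unfolding q_def .
  have "y * (w - z') - t * (c * (w - z')\<^sup>2) \<le> (Pw - Pz) / nn" if t: "0 < t" "t \<le> 1" for t
  proof -
    define wt where "wt = z' + t * (w - z')"
    have "conj_fun \<psi> wt / ereal nn \<le> ereal ((1 - t) * Pz + t * Pw) / ereal nn"
      unfolding wt_def using conj_fun_convex[OF Pz Pw] t nn
      by (intro ereal_divide_right_mono) auto
    then have "ereal (q wt) + conj_fun \<psi> wt / ereal nn
               \<le> ereal (q wt) + ereal (((1 - t) * Pz + t * Pw) / nn)"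
      using nn by (intro add_left_mono) simp
    from order_trans[OF min_q[of wt] this] Pz nn
    have "q z' + Pz / nn \<le> q wt + ((1 - t) * Pz + t * Pw) / nn"
      by simp
    moreover have "q wt - q z' = - t * y * (w - z') + t * (t * (c * (w - z')\<^sup>2))"
      unfolding q_def wt_def y_def by (simp add: algebra_simps power2_eq_square)
    moreover have "((1 - t) * Pz + t * Pw) / nn = Pz / nn + t * ((Pw - Pz) / nn)"
      by (simp add: algebra_simps add_divide_distrib diff_divide_distrib)
    ultimately have "t * (y * (w - z') - t * (c * (w - z')\<^sup>2)) \<le> t * ((Pw - Pz) / nn)"
      by (simp add: algebra_simps)
    then show ?thesis using t by (metis mult_left_le_imp_le)
  qed
  then have "y * (w - z') \<le> (Pw - Pz) / nn"
    by (rule le_of_forall_pos_le_diff_mult)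
  with nn show ?thesis unfolding y_def by (simp add: le_divide_eq algebra_simps)
qed

lemma conj_fun_prox_eq:
  assumes cvx: "convex_on UNIV \<psi>" and nn: "0 < nn"
    and min: "\<And>w. ereal (c * (z' - z)\<^sup>2 + G * (z' - z)) + conj_fun \<psi> z' / ereal nn
                 \<le> ereal (c * (w - z)\<^sup>2 + G * (w - z)) + conj_fun \<psi> w / ereal nn"
  defines "x \<equiv> nn * (- 2 * c * (z' - z) - G)"
  shows "conj_fun \<psi> z' = ereal (z' * x - \<psi> x)"
proof -
  obtain Pz where Pz: "conj_fun \<psi> z' = ereal Pz"
    using conj_fun_prox_finite[OF cvx nn min] conj_fun_neq_MInfty by (cases "conj_fun \<psi> z'") auto
  have "Pz = z' * x - \<psi> x"
  proof (rule conj_fun_eq_of_subgradient[OF cvx Pz])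
    fix w Pw
    assume "conj_fun \<psi> w = ereal Pw"
    from conj_fun_prox_subgradient[OF nn min Pz this]
    show "Pz + x * (w - z') \<le> Pw" unfolding x_def by (simp add: mult.assoc)
  qed
  with Pz show ?thesis by simp
qed

lemma hfun_prox_eq:
  assumes i: "i \<in> {1..n}" and cvx: "convex_on UNIV (\<phi> i)"
    and min: "\<And>w. ereal (c * (z' - z)\<^sup>2 + G * (z' - z)) + hfun n p \<phi> i z'
                 \<le> ereal (c * (w - z)\<^sup>2 + G * (w - z)) + hfun n p \<phi> i w"
    and y: "y = - 2 * c * (z' - z) - G"
  shows "hfun n p \<phi> i z' = ereal (z' * y - \<phi> i (real n * y) / real n)"
proof -
  have n: "0 < real n" using i by simp
  have h: "hfun n p \<phi> i w = conj_fun (\<phi> i) w / ereal (real n)" for w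
    using i by (simp add: hfun_def)
  have "conj_fun (\<phi> i) z' = ereal (z' * (real n * y) - \<phi> i (real n * y))"
    unfolding y by (rule conj_fun_prox_eq[OF cvx n min[unfolded h]])
  with n show ?thesis by (simp add: h field_simps)
qed

lemma hfun_neq_MInfty: "0 < n \<Longrightarrow> hfun n p \<phi> i w \<noteq> -\<infinity>"
  using conj_fun_neq_MInfty[of "\<phi> i" w]
  by (cases "conj_fun (\<phi> i) w") (auto simp: hfun_def)

lemma sum_hfun_prox_gap_eq:
  assumes n: "0 < n" and cvx: "\<forall>i\<in>{1..n}. convex_on UNIV (\<phi> i)"
    and min: "\<forall>i\<in>{1..n}. \<forall>w.
        ereal (c i * (z' i - z i)\<^sup>2 + G i * (z' i - z i)) + hfun n p \<phi> i (z' i)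
        \<le> ereal (c i * (w - z i)\<^sup>2 + G i * (w - z i)) + hfun n p \<phi> i w"
    and y: "\<And>i. y i = - 2 * c i * (z' i - z i) - G i"
  shows "(\<Sum>i=1..n. hfun n p \<phi> i (z' i) + ereal (y i * (u i - z' i)) - hfun n p \<phi> i (u i))
           = ereal (\<Sum>i=1..n. y i * u i - \<phi> i (real n * y i) / real n)
             - (\<Sum>i=1..n. hfun n p \<phi> i (u i))"
proof -
  have "hfun n p \<phi> i (z' i) = ereal (z' i * y i - \<phi> i (real n * y i) / real n)"
    if i: "i \<in> {1..n}" for i
    using i cvx min y by (intro hfun_prox_eq) auto
  then have "(\<Sum>i=1..n. hfun n p \<phi> i (z' i) + ereal (y i * (u i - z' i)) - hfun n p \<phi> i (u i))
      = (\<Sum>i=1..n. ereal (y i * u i - \<phi> i (real n * y i) / real n) - hfun n p \<phi> i (u i))"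
    by (intro sum.cong) (auto simp: algebra_simps)
  also have "\<dots> = ereal (\<Sum>i=1..n. y i * u i - \<phi> i (real n * y i) / real n)
                   - (\<Sum>i=1..n. hfun n p \<phi> i (u i))"
    by (rule sum_ereal_minus) (simp_all add: hfun_neq_MInfty[OF n])
  finally show ?thesis .
qed

lemma hfun_dual_dom_eq_0:
  assumes "u \<in> dual_dom n p m" "n < i" "i \<le> n + p + m"
  shows "hfun n p \<phi> i (u i) = 0"
  using assms by (auto simp: hfun_def dual_dom_def)

lemma dual_D_eq:
  assumes "u \<in> dual_dom n p m"
  shows "dual_D n p m A Bm b f \<phi> g u
           = ereal (dual_d n p m A Bm b f g u) + (\<Sum>i=1..n. hfun n p \<phi> i (u i))"
  using sum_1_atMost_add[of "\<lambda>i. hfun n p \<phi> i (u i)" n "p + m"]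
    hfun_dual_dom_eq_0[OF assms, of "n + _" \<phi>]
  by (simp add: dual_D_def add.assoc)

lemma sum_cmap_split:
  "(\<Sum>i=1..n+p+m. cmap n p A Bm b g x i * u i)
     = (\<Sum>i=1..n. inner (A i) x / real n * u i)
       + (\<Sum>j=1..p. (inner (Bm j) x + b j) * u (n + j))
       + (\<Sum>i=1..m. g i x * u (n + p + i))"
  using sum_1_atMost_add[of "\<lambda>i. cmap n p A Bm b g x i * u i" "n + p" m]
    sum_1_atMost_add[of "\<lambda>i. cmap n p A Bm b g x i * u i" n p]
  by (simp add: cmap_def add.assoc)

lemma lagr_eq_sum_cmap:
  "lagr n p m A Bm b f g x u = f x + (\<Sum>i=1..n+p+m. cmap n p A Bm b g x i * u i)"
  unfolding sum_cmap_split by (simp add: lagr_def mult.commute)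

lemma dual_d_linearization:
  "dual_d n p m A Bm b f g v + (\<Sum>i=1..n+p+m. grad_d n p m A Bm b f g v i * (u i - v i))
     = - lagr n p m A Bm b f g (xstar n p m A Bm b f g v) u"
  unfolding dual_d_def grad_d_def lagr_eq_sum_cmap
  by (simp add: sum_negf sum.distrib[symmetric] algebra_simps)

lemma tri_inner_eq_sum_cmap:
  assumes "0 < n"
  shows "tri_inner n p m A Bm b g x (\<lambda>i. real n * y i) u
           = (\<Sum>i=1..n+p+m. cmap n p A Bm b g x i * u i) - (\<Sum>i=1..n. y i * u i)"
proof -
  have "(\<Sum>i=1..n. (inner (A i) x - real n * y i) / real n * u i)
          = (\<Sum>i=1..n. inner (A i) x / real n * u i) - (\<Sum>i=1..n. y i * u i)"
    unfolding sum_subtractf[symmetric] using assms by (intro sum.cong) (auto simp: field_simps)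
  then show ?thesis unfolding tri_inner_def sum_cmap_split by simp
qed

theorem lemma4:
  fixes n p m :: nat
    and A Bm :: "nat \<Rightarrow> real^'t::finite"
    and b :: "nat \<Rightarrow> real"
    and f :: "real^'t \<Rightarrow> real"
    and \<phi> :: "nat \<Rightarrow> real \<Rightarrow> real"
    and g :: "nat \<Rightarrow> real^'t \<Rightarrow> real"
    and \<mu> M :: real
    and Lg :: "nat \<Rightarrow> real"
    and zs us vs zt :: "nat \<Rightarrow> nat \<Rightarrow> real"
    and ik :: "nat \<Rightarrow> nat"
    and k :: nat
    and u :: "nat \<Rightarrow> real"
  defines "N \<equiv> n + p + m"
  assumes n_pos: "1 \<le> n"
    and mu_pos: "0 < \<mu>"
    and f_sc: "strongly_convex \<mu> f"
    and phi_cvx: "\<forall>i\<in>{1..n}. convex_on UNIV (\<phi> i)"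
    and phi_lip: "\<forall>i\<in>{1..n}. M-lipschitz_on UNIV (\<phi> i)"
    and g_cvx: "\<forall>i\<in>{1..m}. convex_on UNIV (g i)"
    and g_subgrad: "\<forall>i\<in>{1..m}. \<forall>x s. is_subgrad (g i) x s \<longrightarrow> norm s \<le> Lg i"
    and slater: "\<exists>xb. (\<forall>i\<in>{1..m}. g i xb < 0) \<and> (\<forall>j\<in>{1..p}. inner (Bm j) xb + b j = 0)"
    and opt_finite: "bdd_below {f x + (\<Sum>i=1..n. \<phi> i (inner (A i) x)) / real n | x.
                        (\<forall>j\<in>{1..p}. inner (Bm j) x + b j = 0) \<and> (\<forall>i\<in>{1..m}. g i x \<le> 0)}"
    and init: "zs 0 \<in> dual_dom n p m" "us 0 = zs 0"
    and v_def: "\<forall>k. vs k = (\<lambda>i. ardca_theta N k * zs k i + (1 - ardca_theta N k) * us k i)"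
    and zt_min: "\<forall>k. \<forall>i\<in>{1..N}. \<forall>w.
        ereal (real N * ardca_theta N k * Lconst n p \<mu> A Bm Lg i * (zt k i - zs k i)\<^sup>2
               + grad_d n p m A Bm b f g (vs k) i * (zt k i - zs k i)) + hfun n p \<phi> i (zt k i)
        \<le> ereal (real N * ardca_theta N k * Lconst n p \<mu> A Bm Lg i * (w - zs k i)\<^sup>2
               + grad_d n p m A Bm b f g (vs k) i * (w - zs k i)) + hfun n p \<phi> i w"
    and ik_range: "\<forall>k. ik k \<in> {1..N}"
    and z_upd: "\<forall>k. zs (Suc k) = (zs k)(ik k := zt k (ik k))"
    and u_upd: "\<forall>k. us (Suc k) = (\<lambda>i. vs k i + real N * ardca_theta N k * (zs (Suc k) i - zs k i))"
    and u_dom: "u \<in> dual_dom n p m"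
  shows
    "let y = (\<lambda>i. - 2 * real N * ardca_theta N k * Lconst n p \<mu> A Bm Lg i * (zt k i - zs k i)
                   - grad_d n p m A Bm b f g (vs k) i);
         \<sigma>1 = (\<lambda>i. hfun n p \<phi> i (zt k i) + ereal (y i * (u i - zt k i)) - hfun n p \<phi> i (u i));
         \<sigma>2 = dual_d n p m A Bm b f g (vs k)
              + (\<Sum>i=1..N. grad_d n p m A Bm b f g (vs k) i * (u i - vs k i))
              - dual_d n p m A Bm b f g u;
         xs = xstar n p m A Bm b f g (vs k)
     in - (\<Sum>i=1..n. \<sigma>1 i) - ereal \<sigma>2
        = ereal (tri_inner n p m A Bm b g xs (\<lambda>i. real n * y i) u)
          + dual_D n p m A Bm b f \<phi> g u + ereal (f xs)
          + ereal ((\<Sum>i=1..n. \<phi> i (real n * y i)) / real n)"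
proof -
  define y where "y = (\<lambda>i. - 2 * real N * ardca_theta N k * Lconst n p \<mu> A Bm Lg i * (zt k i - zs k i)
                   - grad_d n p m A Bm b f g (vs k) i)"
  define xs where "xs = xstar n p m A Bm b f g (vs k)"
  define H where "H = (\<Sum>i=1..n. hfun n p \<phi> i (u i))"
  have n: "0 < n" using n_pos by simp
  have sum_\<sigma>1: "(\<Sum>i=1..n. hfun n p \<phi> i (zt k i) + ereal (y i * (u i - zt k i)) - hfun n p \<phi> i (u i))
          = ereal (\<Sum>i=1..n. y i * u i - \<phi> i (real n * y i) / real n) - H"
    unfolding H_def
    by (rule sum_hfun_prox_gap_eq[OF n phi_cvx, where z = "zs k"
          and c = "\<lambda>i. real N * ardca_theta N k * Lconst n p \<mu> A Bm Lg i"
          and G = "grad_d n p m A Bm b f g (vs k)"])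
      (use zt_min in \<open>auto simp: N_def y_def algebra_simps\<close>)
  have D: "dual_D n p m A Bm b f \<phi> g u = ereal (dual_d n p m A Bm b f g u) + H"
    unfolding H_def by (rule dual_D_eq[OF u_dom])
  have \<sigma>2: "dual_d n p m A Bm b f g (vs k) + (\<Sum>i=1..N. grad_d n p m A Bm b f g (vs k) i * (u i - vs k i))
          - dual_d n p m A Bm b f g u = - lagr n p m A Bm b f g xs u - dual_d n p m A Bm b f g u"
    unfolding N_def xs_def dual_d_linearization ..
  have "- (\<Sum>i=1..n. y i * u i - \<phi> i (real n * y i) / real n)
          - (- lagr n p m A Bm b f g xs u - dual_d n p m A Bm b f g u)
        = tri_inner n p m A Bm b g xs (\<lambda>i. real n * y i) u + dual_d n p m A Bm b f g u + f xs
          + (\<Sum>i=1..n. \<phi> i (real n * y i)) / real n"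
    unfolding lagr_eq_sum_cmap tri_inner_eq_sum_cmap[OF n]
    by (simp add: sum_subtractf sum_divide_distrib)
  then show ?thesis
    unfolding y_def[symmetric] xs_def[symmetric] Let_def sum_\<sigma>1 \<sigma>2 D
    using sum_ereal_neq_MInfty[of "{1..n}", OF hfun_neq_MInfty[OF n]] by (cases H) (auto simp: H_def)
qed

end
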